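(* Let $G=(V,E)$ be connected with $n\ge3$ vertices. Then $\mathrm{bc}(u)=0$ for every $u\in V_1$, and for every $u\in V_{\ge2}$ and every $s\in V\setminus\{u\}$: (a) if $s\in V_{\ge2}$, then $\delta_s(u)=\tilde\delta_s(u)+\zeta_s(u)+\mathrm{deg}_1(u)$; (b) if $s\in V_1$ and $s$ is not adjacent to $u$, with unique neighbor $y$, then $\delta_s(u)=\tilde\delta_y(u)+\zeta_y(u)+\mathrm{deg}_1(u)$; (c) if $s\in V_1$ and $s$ is adjacent to $u$, then $\delta_s(u)=n-2$. Consequently $\mathrm{bc}(u)=\frac{1}{(n-1)(n-2)}\sum_{s\in V\setminus\{u\}}\delta_s(u)$ is determined by these values.
   Context: Graphs are finite, simple, undirected, unweighted. In a graph, $\sigma_{st}$ is the number of shortest $s$–$t$ paths and $\sigma_{st}(v)$ the number through $v\notin\{s,t\}$; $\delta_s(v)=\sum_{t\in V,\ t\ne s,v}\sigma_{st}(v)/\sigma_{st}$ (computed in $G$), and $\mathrm{bc}(v)=\frac{1}{(n-1)(n-2)}\sum_{s\ne v}\delta_s(v)$. $V_1$ is the set of degree-1 vertices of $G$, $V_{\ge2}=V\setminus V_1$, $\tilde G$ the subgraph induced by $V_{\ge2}$, with counts $\tilde\sigma$. For $t\in V$, $\mathrm{deg}_1(t)$ is the number of neighbors of $t$ of degree 1 in $G$. For $s,u\in V_{\ge2}$: $\tilde\delta_s(u)=\sum_{t\in V_{\ge2},t\neq s,u}\tilde\sigma_{st}(u)/\tilde\sigma_{st}$ and $\zeta_s(u)=\sum_{t\in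 V_{\ge2},\,t\ne s,u}\mathrm{deg}_1(t)\,\tilde\sigma_{st}(u)/\tilde\sigma_{st}$; set $\tilde\delta_u(u)=\zeta_u(u)=0$. *)

theory Defs
  imports Complex_Main
begin

definition simple_graph :: "'a set \<Rightarrow> ('a \<Rightarrow> 'a \<Rightarrow> bool) \<Rightarrow> bool" where
  "simple_graph V E \<longleftrightarrow> finite V \<and> (\<forall>x y. E x y \<longrightarrow> E y x) \<and> (\<forall>x. \<not> E x x)
     \<and> (\<forall>x y. E x y \<longrightarrow> x \<in> V \<and> y \<in> V)"

definition is_walk :: "'a set \<Rightarrow> ('a \<Rightarrow> 'a \<Rightarrow> bool) \<Rightarrow> 'a \<Rightarrow> 'a \<Rightarrow> 'a list \<Rightarrow> bool" where
  "is_walk V E s t p \<longleftrightarrow> p \<noteq> [] \<and> hd p = s \<and> last p = t \<and> set p \<subseteq> V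
     \<and> (\<forall>i. Suc i < length p \<longrightarrow> E (p ! i) (p ! Suc i))"

definition shortest_paths :: "'a set \<Rightarrow> ('a \<Rightarrow> 'a \<Rightarrow> bool) \<Rightarrow> 'a \<Rightarrow> 'a \<Rightarrow> 'a list set" where
  "shortest_paths V E s t = {p. is_walk V E s t p \<and> (\<forall>q. is_walk V E s t q \<longrightarrow> length p \<le> length q)}"

definition connected_graph :: "'a set \<Rightarrow> ('a \<Rightarrow> 'a \<Rightarrow> bool) \<Rightarrow> bool" where
  "connected_graph V E \<longleftrightarrow> (\<forall>s\<in>V. \<forall>t\<in>V. \<exists>p. is_walk V E s t p)"

definition sigma :: "'a set \<Rightarrow> ('a \<Rightarrow> 'a \<Rightarrow> bool) \<Rightarrow> 'a \<Rightarrow> 'a \<Rightarrow> nat" where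
  "sigma V E s t = card (shortest_paths V E s t)"

definition sigma_via :: "'a set \<Rightarrow> ('a \<Rightarrow> 'a \<Rightarrow> bool) \<Rightarrow> 'a \<Rightarrow> 'a \<Rightarrow> 'a \<Rightarrow> nat" where
  "sigma_via V E s t v = card {p \<in> shortest_paths V E s t. v \<in> set p}"

definition delta :: "'a set \<Rightarrow> ('a \<Rightarrow> 'a \<Rightarrow> bool) \<Rightarrow> 'a \<Rightarrow> 'a \<Rightarrow> real" where
  "delta V E s v = (\<Sum>t\<in>V - {s, v}. real (sigma_via V E s t v) / real (sigma V E s t))"

definition bc :: "'a set \<Rightarrow> ('a \<Rightarrow> 'a \<Rightarrow> bool) \<Rightarrow> 'a \<Rightarrow> real" where
  "bc V E v = 1 / ((real (card V) - 1) * (real (card V) - 2)) * (\<Sum>s\<in>V - {v}. delta V E s v)"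

definition degree :: "'a set \<Rightarrow> ('a \<Rightarrow> 'a \<Rightarrow> bool) \<Rightarrow> 'a \<Rightarrow> nat" where
  "degree V E v = card {w \<in> V. E v w}"

definition V1 :: "'a set \<Rightarrow> ('a \<Rightarrow> 'a \<Rightarrow> bool) \<Rightarrow> 'a set" where
  "V1 V E = {v \<in> V. degree V E v = 1}"

definition V2 :: "'a set \<Rightarrow> ('a \<Rightarrow> 'a \<Rightarrow> bool) \<Rightarrow> 'a set" where
  "V2 V E = V - V1 V E"

definition deg1 :: "'a set \<Rightarrow> ('a \<Rightarrow> 'a \<Rightarrow> bool) \<Rightarrow> 'a \<Rightarrow> nat" where
  "deg1 V E t = card {w \<in> V. E t w \<and> degree V E w = 1}"

definition tdelta :: "'a set \<Rightarrow> ('a \<Rightarrow> 'a \<Rightarrow> bool) \<Rightarrow> 'a \<Rightarrow> 'a \<Rightarrow> real" where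
  "tdelta V E s u = (if s = u then 0 else
     (\<Sum>t\<in>V2 V E - {s, u}. real (sigma_via (V2 V E) E s t u) / real (sigma (V2 V E) E s t)))"

definition zeta :: "'a set \<Rightarrow> ('a \<Rightarrow> 'a \<Rightarrow> bool) \<Rightarrow> 'a \<Rightarrow> 'a \<Rightarrow> real" where
  "zeta V E s u = (if s = u then 0 else
     (\<Sum>t\<in>V2 V E - {s, u}. real (deg1 V E t) * real (sigma_via (V2 V E) E s t u)
                                / real (sigma (V2 V E) E s t)))"

end

theory Submission
  imports Defs
begin

text \<open>A leaf never lies strictly inside a shortest path: its two path neighbours would both be
  its unique neighbour, and cutting out the detour gives a shorter walk. Hence a leaf has
  betweenness zero, and shortest paths between non-leaves are exactly the shortest paths of the
  graph induced by the non-leaves, with the same counts. A shortest path starting (or ending) at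
  a leaf is a shortest path starting (or ending) at its neighbour, extended by one edge, so a leaf
  endpoint contributes exactly what its neighbour contributes. Grouping the leaf targets by their
  neighbour turns their contributions into the weights \<open>deg\<^sub>1\<close>, which yields \<open>\<zeta>\<close> together
  with \<open>deg\<^sub>1(u)\<close> for the leaves hanging at \<open>u\<close>; and every path leaving a leaf adjacent to \<open>u\<close>
  passes through \<open>u\<close>.\<close>

lemma is_walk_iff_successively:
  "is_walk V E s t p \<longleftrightarrow> p \<noteq> [] \<and> hd p = s \<and> last p = t \<and> set p \<subseteq> V \<and> successively E p"
  by (simp add: is_walk_def successively_conv_nth)

lemma mem_shortest_paths:
  "p \<in> shortest_paths V E s t \<longleftrightarrow> is_walk V E s t p \<and> (\<forall>q. is_walk V E s t q \<longrightarrow> length p \<le> length q)"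
  by (simp add: shortest_paths_def)

lemma simple_graph_sym: "simple_graph V E \<Longrightarrow> E x y \<Longrightarrow> E y x"
  by (simp add: simple_graph_def)

lemma simple_graph_irrefl: "simple_graph V E \<Longrightarrow> \<not> E x x"
  by (simp add: simple_graph_def)

lemma simple_graph_edge_in: "simple_graph V E \<Longrightarrow> E x y \<Longrightarrow> x \<in> V \<and> y \<in> V"
  by (simp add: simple_graph_def)

lemma simple_graph_finite: "simple_graph V E \<Longrightarrow> finite V"
  by (simp add: simple_graph_def)

lemma leaf_neighbour_unique:
  assumes "simple_graph V E" "v \<in> V1 V E" "E v a" "E v b"
  shows "a = b"
proof -
  have "a \<in> {w \<in> V. E v w}" "b \<in> {w \<in> V. E v w}"
    using assms simple_graph_edge_in by fastforce+
  moreover obtain x where "{w \<in> V. E v w} = {x}"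
    using assms(2) by (auto simp: V1_def degree_def card_1_singleton_iff)
  ultimately show ?thesis
    by (metis singletonD)
qed

subsection \<open>Walks and shortest paths\<close>

lemma is_walk_rev:
  assumes "simple_graph V E"
  shows "is_walk V E t s (rev p) \<longleftrightarrow> is_walk V E s t p"
proof -
  have swap: "(\<lambda>x y. E y x) = E"
    using simple_graph_sym[OF assms] by blast
  show ?thesis
    unfolding is_walk_iff_successively successively_rev swap by (auto simp: hd_rev last_rev)
qed

lemma is_walk_from_leaf_iff:
  assumes G: "simple_graph V E" and v: "v \<in> V1 V E" and vy: "E v y" and tv: "t \<noteq> v"
  shows "is_walk V E v t p \<longleftrightarrow> (\<exists>q. p = v # q \<and> is_walk V E y t q)"
proof
  assume w: "is_walk V E v t p"
  then obtain q where p: "p = v # q"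
    by (cases p) (auto simp: is_walk_iff_successively)
  with w tv have "q \<noteq> []"
    by (auto simp: is_walk_iff_successively)
  with w p have "E v (hd q)" "successively E q"
    by (auto simp: is_walk_iff_successively successively_Cons)
  with leaf_neighbour_unique[OF G v vy] have "hd q = y"
    by blast
  with w p \<open>q \<noteq> []\<close> \<open>successively E q\<close> show "\<exists>q. p = v # q \<and> is_walk V E y t q"
    by (auto simp: is_walk_iff_successively)
next
  assume "\<exists>q. p = v # q \<and> is_walk V E y t q"
  moreover have "v \<in> V"
    using v by (simp add: V1_def)
  ultimately show "is_walk V E v t p"
    using vy by (auto simp: is_walk_iff_successively successively_Cons)
qed

lemma is_walk_drop_backtrack:
  assumes "is_walk V E s t (xs @ a # v # a # zs)"
  shows "is_walk V E s t (xs @ a # zs)"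
proof -
  have "successively E (xs @ [a])" "successively E (a # zs)"
    using assms by (simp_all add: is_walk_iff_successively successively_append_iff)
  then have "successively E (xs @ a # zs)"
    by (simp add: successively_append_iff)
  with assms show ?thesis
    by (cases zs) (auto simp: is_walk_iff_successively hd_append)
qed

lemma shortest_path_no_backtrack:
  assumes "p \<in> shortest_paths V E s t"
  shows "p \<noteq> xs @ a # v # a # zs"
proof
  assume p: "p = xs @ a # v # a # zs"
  then have "is_walk V E s t (xs @ a # zs)"
    using assms is_walk_drop_backtrack by (auto simp: mem_shortest_paths)
  then have "length p \<le> length (xs @ a # zs)"
    using assms unfolding mem_shortest_paths by blast
  then show False
    using p by simp
qed

lemma leaf_not_interior_of_shortest_path:
  assumes G: "simple_graph V E" and p: "p \<in> shortest_paths V E s t"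
    and "v \<in> set p" "v \<noteq> s" "v \<noteq> t"
  shows "v \<notin> V1 V E"
proof
  assume v: "v \<in> V1 V E"
  obtain xs ys where split: "p = xs @ v # ys"
    using split_list[OF \<open>v \<in> set p\<close>] by blast
  have w: "hd p = s" "last p = t" "successively E p"
    using p by (simp_all add: mem_shortest_paths is_walk_iff_successively)
  have "xs \<noteq> []" "ys \<noteq> []"
    using w split \<open>v \<noteq> s\<close> \<open>v \<noteq> t\<close> by auto
  then obtain xs' a b ys' where p_eq: "p = xs' @ a # v # b # ys'"
    using split by (metis rev_exhaust neq_Nil_conv append.assoc append_Cons append_Nil)
  then have "E a v" "E v b"
    using w(3) by (simp_all add: successively_append_iff)
  then have "a = b"
    using leaf_neighbour_unique[OF G v] simple_graph_sym[OF G] by blast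
  then show False
    using shortest_path_no_backtrack[OF p] p_eq by blast
qed

lemma shortest_paths_eq_image:
  assumes walks: "\<And>p. is_walk V E s t p \<longleftrightarrow> (\<exists>q. p = f q \<and> is_walk V E s' t' q)"
    and len: "\<And>q. length (f q) = length q + k"
  shows "shortest_paths V E s t = f ` shortest_paths V E s' t'"
proof
  show "shortest_paths V E s t \<subseteq> f ` shortest_paths V E s' t'"
  proof
    fix p assume "p \<in> shortest_paths V E s t"
    then have "is_walk V E s t p" and min: "\<forall>p'. is_walk V E s t p' \<longrightarrow> length p \<le> length p'"
      by (simp_all add: mem_shortest_paths)
    then obtain q where "p = f q" "is_walk V E s' t' q"
      using walks by blast
    moreover have "\<forall>q'. is_walk V E s' t' q' \<longrightarrow> length q \<le> length q'"
      using min walks len \<open>p = f q\<close> by (metis add_le_cancel_right)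
    ultimately show "p \<in> f ` shortest_paths V E s' t'"
      by (auto simp: mem_shortest_paths)
  qed
next
  show "f ` shortest_paths V E s' t' \<subseteq> shortest_paths V E s t"
  proof
    fix p assume "p \<in> f ` shortest_paths V E s' t'"
    then obtain q where p: "p = f q" and "is_walk V E s' t' q"
      and min: "\<forall>q'. is_walk V E s' t' q' \<longrightarrow> length q \<le> length q'"
      by (auto simp: mem_shortest_paths)
    then have "is_walk V E s t p"
      using walks by blast
    moreover have "\<forall>p'. is_walk V E s t p' \<longrightarrow> length p \<le> length p'"
      using min walks len p by (metis add_le_cancel_right)
    ultimately show "p \<in> shortest_paths V E s t"
      by (simp add: mem_shortest_paths)
  qed
qed

lemma shortest_paths_rev:
  assumes "simple_graph V E"
  shows "shortest_paths V E t s = rev ` shortest_paths V E s t"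
proof (rule shortest_paths_eq_image[where k = 0])
  show "is_walk V E t s p \<longleftrightarrow> (\<exists>q. p = rev q \<and> is_walk V E s t q)" for p
    using is_walk_rev[OF assms, of t s "rev p"] by (metis rev_rev_ident)
qed simp

lemma shortest_paths_from_leaf:
  assumes "simple_graph V E" "v \<in> V1 V E" "E v y" "t \<noteq> v"
  shows "shortest_paths V E v t = (#) v ` shortest_paths V E y t"
  by (rule shortest_paths_eq_image[where k = 1]) (simp_all add: is_walk_from_leaf_iff[OF assms])

lemma shortest_paths_self:
  assumes "s \<in> V"
  shows "shortest_paths V E s s = {[s]}"
proof -
  have walk: "is_walk V E s s [s]"
    using assms by (simp add: is_walk_iff_successively)
  have "p = [s]" if "p \<in> shortest_paths V E s s" for p
  proof -
    have "length p \<le> 1" "p \<noteq> []" "hd p = s"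
      using that walk by (auto simp: mem_shortest_paths is_walk_iff_successively)
    then show ?thesis
      by (cases p) auto
  qed
  moreover have "[s] \<in> shortest_paths V E s s"
    using walk by (auto simp: mem_shortest_paths is_walk_iff_successively Suc_le_eq)
  ultimately show ?thesis
    by blast
qed

lemma shortest_paths_nonempty:
  assumes "connected_graph V E" "s \<in> V" "t \<in> V"
  shows "shortest_paths V E s t \<noteq> {}"
proof -
  obtain p where "is_walk V E s t p"
    using assms unfolding connected_graph_def by blast
  then obtain p0 where "is_walk V E s t p0 \<and> (\<forall>q. is_walk V E s t q \<longrightarrow> length p0 \<le> length q)"
    using ex_has_least_nat[of "is_walk V E s t" p length] by blast
  then have "p0 \<in> shortest_paths V E s t"
    by (simp add: mem_shortest_paths)
  then show ?thesis
    by blast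
qed

lemma finite_shortest_paths:
  assumes "finite V"
  shows "finite (shortest_paths V E s t)"
proof (cases "shortest_paths V E s t = {}")
  case False
  then obtain p0 where "p0 \<in> shortest_paths V E s t"
    by blast
  then have "shortest_paths V E s t \<subseteq> {xs. set xs \<subseteq> V \<and> length xs \<le> length p0}"
    by (auto simp: mem_shortest_paths is_walk_iff_successively)
  then show ?thesis
    using finite_lists_length_le[OF assms] by (rule finite_subset)
qed simp

lemma sigma_pos:
  assumes "simple_graph V E" "connected_graph V E" "s \<in> V" "t \<in> V"
  shows "0 < sigma V E s t"
  unfolding sigma_def
  using shortest_paths_nonempty[OF assms(2-4)] finite_shortest_paths[OF simple_graph_finite[OF assms(1)]]
  by (simp add: card_gt_0_iff)

lemma shortest_paths_restrict:
  assumes "W \<subseteq> V" "shortest_paths V E s t \<noteq> {}"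
    and inside: "\<And>p. p \<in> shortest_paths V E s t \<Longrightarrow> set p \<subseteq> W"
  shows "shortest_paths W E s t = shortest_paths V E s t"
proof -
  obtain p0 where p0: "p0 \<in> shortest_paths V E s t"
    using assms(2) by blast
  have walk_W: "is_walk W E s t q \<longleftrightarrow> is_walk V E s t q \<and> set q \<subseteq> W" for q
    using \<open>W \<subseteq> V\<close> by (auto simp: is_walk_iff_successively)
  have "is_walk W E s t p0"
    using p0 inside[OF p0] walk_W by (simp add: mem_shortest_paths)
  then show ?thesis
    using p0 inside unfolding set_eq_iff mem_shortest_paths walk_W by (meson order_trans)
qed

lemma shortest_paths_core:
  assumes G: "simple_graph V E" and "connected_graph V E" "s \<in> V2 V E" "t \<in> V2 V E"
  shows "shortest_paths (V2 V E) E s t = shortest_paths V E s t"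
proof (rule shortest_paths_restrict)
  show "shortest_paths V E s t \<noteq> {}"
    using assms(3,4) by (intro shortest_paths_nonempty[OF assms(2)]) (auto simp: V2_def)
next
  fix p assume p: "p \<in> shortest_paths V E s t"
  then have "set p \<subseteq> V"
    by (simp add: mem_shortest_paths is_walk_iff_successively)
  then show "set p \<subseteq> V2 V E"
    using assms leaf_not_interior_of_shortest_path[OF G p] by (auto simp: V2_def)
qed (auto simp: V2_def)

subsection \<open>Leaves and their neighbours\<close>

lemma walk_stays_in_closed_set:
  assumes closed: "\<And>x w. x \<in> S \<Longrightarrow> E x w \<Longrightarrow> w \<in> S"
  shows "successively E p \<Longrightarrow> p \<noteq> [] \<Longrightarrow> hd p \<in> S \<Longrightarrow> set p \<subseteq> S"
proof (induction p)
  case (Cons a p)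
  then show ?case
    using closed by (cases p) (auto simp: successively_Cons)
qed simp

text \<open>With only two vertices two adjacent leaves would form a whole component; this is where
  \<open>n \<ge> 3\<close> enters.\<close>
lemma leaf_neighbour_not_leaf:
  assumes G: "simple_graph V E" and C: "connected_graph V E" and n3: "card V \<ge> 3"
    and v: "v \<in> V1 V E" and vy: "E v y"
  shows "y \<in> V2 V E"
proof (rule ccontr)
  assume "y \<notin> V2 V E"
  then have y: "y \<in> V1 V E"
    using simple_graph_edge_in[OF G vy] by (simp add: V2_def)
  have closed: "w \<in> {v, y}" if "x \<in> {v, y}" "E x w" for x w
    using that leaf_neighbour_unique[OF G v _ vy] leaf_neighbour_unique[OF G y _ simple_graph_sym[OF G vy]]
    by auto
  have "card {v, y} \<le> 2"
    by (cases "v = y") simp_all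
  then have "\<not> V \<subseteq> {v, y}"
    using n3 card_mono[of "{v, y}" V] by auto
  then obtain w where w: "w \<in> V" "w \<notin> {v, y}"
    by blast
  obtain p where "is_walk V E v w p"
    using C w(1) simple_graph_edge_in[OF G vy] unfolding connected_graph_def by blast
  then have "set p \<subseteq> {v, y}" "w \<in> set p"
    using walk_stays_in_closed_set[of "{v, y}" E p, OF closed]
    by (auto simp: is_walk_iff_successively)
  then show False
    using w by blast
qed

lemma sum_leaves_by_neighbour:
  fixes g :: "'a \<Rightarrow> real"
  assumes G: "simple_graph V E" and C: "connected_graph V E" and n3: "card V \<ge> 3"
    and g: "\<And>t y. t \<in> V1 V E \<Longrightarrow> E t y \<Longrightarrow> g t = g y"
  shows "(\<Sum>t\<in>V1 V E. g t) = (\<Sum>y\<in>V2 V E. real (deg1 V E y) * g y)"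
proof -
  have fin: "finite (V1 V E)" "finite (V2 V E)"
    using simple_graph_finite[OF G] by (auto simp: V1_def V2_def)
  have "(\<Sum>t\<in>V1 V E. g t) = (\<Sum>t\<in>V1 V E. \<Sum>y | y \<in> V2 V E \<and> E t y. g y)"
  proof (rule sum.cong[OF refl])
    fix t assume t: "t \<in> V1 V E"
    then obtain y where "E t y"
      by (auto simp: V1_def degree_def card_1_singleton_iff)
    then have "{y. y \<in> V2 V E \<and> E t y} = {y}"
      using leaf_neighbour_not_leaf[OF G C n3 t] leaf_neighbour_unique[OF G t] by blast
    then show "g t = (\<Sum>y | y \<in> V2 V E \<and> E t y. g y)"
      using g[OF t \<open>E t y\<close>] by simp
  qed
  also have "\<dots> = (\<Sum>y\<in>V2 V E. \<Sum>t | t \<in> V1 V E \<and> E t y. g y)"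
    by (rule sum.swap_restrict[OF fin])
  also have "\<dots> = (\<Sum>y\<in>V2 V E. real (deg1 V E y) * g y)"
  proof (rule sum.cong[OF refl])
    fix y
    have "{t. t \<in> V1 V E \<and> E t y} = {w \<in> V. E y w \<and> degree V E w = 1}"
      using simple_graph_sym[OF G] by (auto simp: V1_def)
    then show "(\<Sum>t | t \<in> V1 V E \<and> E t y. g y) = real (deg1 V E y) * g y"
      by (simp add: deg1_def)
  qed
  finally show ?thesis .
qed

subsection \<open>Pair-dependencies\<close>

definition pair_dependency :: "'a set \<Rightarrow> ('a \<Rightarrow> 'a \<Rightarrow> bool) \<Rightarrow> 'a \<Rightarrow> 'a \<Rightarrow> 'a \<Rightarrow> real" where
  "pair_dependency V E s t u = real (sigma_via V E s t u) / real (sigma V E s t)"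

lemma delta_eq_sum_pair_dependency:
  "delta V E s u = (\<Sum>t\<in>V - {s, u}. pair_dependency V E s t u)"
  by (simp add: delta_def pair_dependency_def)

lemma pair_dependency_eq_image:
  assumes sp: "shortest_paths V E s t = f ` shortest_paths V' E s' t'" and "inj f"
    and mem: "\<And>q. u \<in> set (f q) \<longleftrightarrow> u \<in> set q"
  shows "pair_dependency V E s t u = pair_dependency V' E s' t' u"
proof -
  have inj: "inj_on f A" for A
    using \<open>inj f\<close> by (simp add: inj_on_def inj_def)
  have "{p \<in> shortest_paths V E s t. u \<in> set p} = f ` {q \<in> shortest_paths V' E s' t'. u \<in> set q}"
    unfolding sp using mem by auto
  then show ?thesis
    unfolding pair_dependency_def sigma_def sigma_via_def sp by (simp add: card_image[OF inj])
qed

lemma pair_dependency_sym: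
  "simple_graph V E \<Longrightarrow> pair_dependency V E t s u = pair_dependency V E s t u"
  by (rule pair_dependency_eq_image[OF shortest_paths_rev]) simp_all

lemma pair_dependency_from_leaf:
  assumes "simple_graph V E" "v \<in> V1 V E" "E v y" "t \<noteq> v" "u \<noteq> v"
  shows "pair_dependency V E v t u = pair_dependency V E y t u"
  by (rule pair_dependency_eq_image[OF shortest_paths_from_leaf[OF assms(1-4)]])
    (use assms(5) in auto)

lemma pair_dependency_to_leaf:
  assumes "simple_graph V E" "v \<in> V1 V E" "E v y" "s \<noteq> v" "u \<noteq> v"
  shows "pair_dependency V E s v u = pair_dependency V E s y u"
  using pair_dependency_from_leaf[OF assms] pair_dependency_sym[OF assms(1)] by metis

lemma pair_dependency_self: "s \<in> V \<Longrightarrow> u \<noteq> s \<Longrightarrow> pair_dependency V E s s u = 0"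
  by (simp add: pair_dependency_def sigma_via_def shortest_paths_self)

lemma pair_dependency_target:
  assumes "simple_graph V E" "connected_graph V E" "s \<in> V" "u \<in> V"
  shows "pair_dependency V E s u u = 1"
proof -
  have "{p \<in> shortest_paths V E s u. u \<in> set p} = shortest_paths V E s u"
    by (auto simp: mem_shortest_paths is_walk_iff_successively)
  then show ?thesis
    using sigma_pos[OF assms] by (simp add: pair_dependency_def sigma_via_def sigma_def)
qed

lemma pair_dependency_leaf:
  assumes "simple_graph V E" "u \<in> V1 V E" "u \<noteq> s" "u \<noteq> t"
  shows "pair_dependency V E s t u = 0"
proof -
  have none: "{p \<in> shortest_paths V E s t. u \<in> set p} = {}"
    using leaf_not_interior_of_shortest_path[OF assms(1) _ _ assms(3,4)] assms(2) by blast
  show ?thesis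
    unfolding pair_dependency_def sigma_via_def none by simp
qed

lemma pair_dependency_core:
  assumes "simple_graph V E" "connected_graph V E" "s \<in> V2 V E" "t \<in> V2 V E"
  shows "pair_dependency (V2 V E) E s t u = pair_dependency V E s t u"
  unfolding pair_dependency_def sigma_def sigma_via_def shortest_paths_core[OF assms] ..

subsection \<open>The dependency formulas\<close>

lemma bc_leaf:
  assumes "simple_graph V E" "u \<in> V1 V E"
  shows "bc V E u = 0"
proof -
  have "delta V E s u = 0" if "s \<in> V - {u}" for s
    unfolding delta_eq_sum_pair_dependency using that
    by (intro sum.neutral ballI pair_dependency_leaf[OF assms]) auto
  then show ?thesis
    by (simp add: bc_def)
qed

lemma delta_core_source:
  assumes G: "simple_graph V E" and C: "connected_graph V E" and n3: "card V \<ge> 3"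
    and u: "u \<in> V2 V E" and s: "s \<in> V2 V E" and su: "s \<noteq> u"
  shows "delta V E s u = tdelta V E s u + zeta V E s u + real (deg1 V E u)"
proof -
  let ?pd = "\<lambda>t. pair_dependency V E s t u"
  have fin: "finite (V1 V E)" "finite (V2 V E)"
    using simple_graph_finite[OF G] by (auto simp: V1_def V2_def)
  have sV: "s \<in> V" "u \<in> V"
    using s u by (auto simp: V2_def)
  have pd_core: "t \<in> V2 V E \<Longrightarrow> ?pd t = pair_dependency (V2 V E) E s t u" for t
    using pair_dependency_core[OF G C s] by simp
  have core_split: "V2 V E = insert s (insert u (V2 V E - {s, u}))"
    using s u by auto
  have split: "V - {s, u} = (V2 V E - {s, u}) \<union> V1 V E"
    using s u by (auto simp: V1_def V2_def)
  have "delta V E s u = (\<Sum>t\<in>V2 V E - {s, u}. ?pd t) + (\<Sum>t\<in>V1 V E. ?pd t)"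
    unfolding delta_eq_sum_pair_dependency split
    by (rule sum.union_disjoint) (use fin in \<open>auto simp: V2_def\<close>)
  also have "(\<Sum>t\<in>V2 V E - {s, u}. ?pd t) = tdelta V E s u"
    using su pd_core by (simp add: tdelta_def pair_dependency_def)
  also have "(\<Sum>t\<in>V1 V E. ?pd t) = (\<Sum>y\<in>V2 V E. real (deg1 V E y) * ?pd y)"
    using s u by (intro sum_leaves_by_neighbour[OF G C n3])
      (auto simp: V2_def intro: pair_dependency_to_leaf[OF G])
  also have "\<dots> = real (deg1 V E s) * ?pd s + real (deg1 V E u) * ?pd u
      + (\<Sum>y\<in>V2 V E - {s, u}. real (deg1 V E y) * ?pd y)"
    using fin(2) s u su by (subst core_split) (simp add: algebra_simps)
  also have "(\<Sum>y\<in>V2 V E - {s, u}. real (deg1 V E y) * ?pd y) = zeta V E s u"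
    using su pd_core by (simp add: zeta_def pair_dependency_def)
  finally show ?thesis
    using pair_dependency_self[OF sV(1) su[symmetric]] pair_dependency_target[OF G C sV] by simp
qed

lemma delta_leaf_source_not_adjacent:
  assumes G: "simple_graph V E" and C: "connected_graph V E" and n3: "card V \<ge> 3"
    and u: "u \<in> V2 V E" and s: "s \<in> V1 V E" and "\<not> E s u" and sy: "E s y"
  shows "delta V E s u = tdelta V E y u + zeta V E y u + real (deg1 V E u)"
proof -
  let ?pd = "\<lambda>t. pair_dependency V E y t u"
  have fin: "finite V"
    using simple_graph_finite[OF G] .
  have y: "y \<in> V2 V E"
    using leaf_neighbour_not_leaf[OF G C n3 s sy] .
  have ne: "y \<noteq> u" "s \<noteq> u" "y \<noteq> s"
    using \<open>\<not> E s u\<close> sy s u simple_graph_irrefl[OF G] by (auto simp: V2_def)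
  have yV: "y \<in> V"
    using simple_graph_edge_in[OF G sy] by simp
  have pd_y: "?pd y = 0"
    using pair_dependency_self[OF yV] ne by simp
  have pd_s: "?pd s = 0"
    using pair_dependency_to_leaf[OF G s sy] pd_y ne by simp
  have "delta V E s u = (\<Sum>t\<in>V - {s, u}. ?pd t)"
    unfolding delta_eq_sum_pair_dependency
    using pair_dependency_from_leaf[OF G s sy] ne by (intro sum.cong) auto
  also have "\<dots> = (\<Sum>t\<in>V - {s, u} - {y}. ?pd t)"
    using fin pd_y by (simp add: sum_diff1)
  also have "V - {s, u} - {y} = V - {y, u} - {s}"
    by auto
  also have "(\<Sum>t\<in>V - {y, u} - {s}. ?pd t) = delta V E y u"
    using fin pd_s by (simp add: sum_diff1 delta_eq_sum_pair_dependency)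
  finally show ?thesis
    using delta_core_source[OF G C n3 u y ne(1)] by simp
qed

lemma delta_leaf_source_adjacent:
  assumes G: "simple_graph V E" and C: "connected_graph V E" and n3: "card V \<ge> 3"
    and u: "u \<in> V2 V E" and s: "s \<in> V1 V E" and su: "E s u"
  shows "delta V E s u = real (card V) - 2"
proof -
  have sV: "s \<in> V" "u \<in> V" and "s \<noteq> u"
    using simple_graph_edge_in[OF G su] simple_graph_irrefl[OF G] su by auto
  have "pair_dependency V E s t u = 1" if "t \<in> V - {s, u}" for t
    using that \<open>s \<noteq> u\<close> pair_dependency_from_leaf[OF G s su, of t u] pair_dependency_sym[OF G]
      pair_dependency_target[OF G C _ sV(2), of t] by auto
  then have "delta V E s u = real (card (V - {s, u}))"
    by (simp add: delta_eq_sum_pair_dependency)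
  also have "card (V - {s, u}) = card V - 2"
    using sV \<open>s \<noteq> u\<close> simple_graph_finite[OF G] by (simp add: card_Diff_subset)
  finally show ?thesis
    using n3 by simp
qed

theorem mainTheorem5:
  fixes V :: "'a set" and E :: "'a \<Rightarrow> 'a \<Rightarrow> bool"
  assumes "simple_graph V E"
    and "connected_graph V E"
    and "card V \<ge> 3"
  shows "(\<forall>u \<in> V1 V E. bc V E u = 0)
    \<and> (\<forall>u \<in> V2 V E. \<forall>s \<in> V - {u}.
          (s \<in> V2 V E \<longrightarrow>
             delta V E s u = tdelta V E s u + zeta V E s u + real (deg1 V E u))
        \<and> (s \<in> V1 V E \<and> \<not> E s u \<longrightarrow> (\<forall>y. E s y \<longrightarrow>
             delta V E s u = tdelta V E y u + zeta V E y u + real (deg1 V E u)))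
        \<and> (s \<in> V1 V E \<and> E s u \<longrightarrow> delta V E s u = real (card V) - 2))"
  using bc_leaf[OF assms(1)] delta_core_source[OF assms] delta_leaf_source_not_adjacent[OF assms]
    delta_leaf_source_adjacent[OF assms]
  by blast

end
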